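(* Let $\Phi:\mathbb{R}_{++}^{n\times m}\to\mathbb{R}$ be a convex function which is positively 1-homogeneous ($\Phi(tA)=t\Phi(A)$ for all $t>0$). Then for every $p\in\mathcal{P}_{n-1}$, $q\in\mathcal{P}_{m-1}$, \[ \inf_{P\in\Pi(p,q)}\Phi(P)=\sup\Big\{\langle p,\alpha\rangle+\langle q,\beta\rangle\ :\ \alpha\in\mathbb{R}^n,\ \beta\in\mathbb{R}^m,\ \Phi^*(\alpha\oplus\beta)=0\Big\}. \]
   Context: $\mathbb{R}_{++}^{n\times m}$ denotes the set of real $n\times m$ matrices with all entries strictly positive. $\mathcal{P}_{n-1}=\{p\in\mathbb{R}^n:\sum_i p_i=1,\ p_i>0\}$, similarly $\mathcal{P}_{m-1}$. $\Pi(p,q)=\{P\in\mathbb{R}_{++}^{n\times m}:\sum_j P_{ij}=p_i\ \forall i,\ \sum_i P_{ij}=q_j\ \forall j\}$. The Legendre transform is $\Phi^*(u)=\sup_{A\in\mathbb{R}_{++}^{n\times m}}\{\langle A,u\rangle-\Phi(A)\}\in\mathbb{R}\cup\{+\infty\}$ with $\langle A,u\rangle=\sum_{i,j}A_{ij}u^{ij}$, and $(\alpha\oplus\beta)^{ij}=\alpha^i+\beta^j$. *)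

theory Defs
  imports "HOL-Analysis.Analysis"
begin

text \<open>Matrices in R^{n x m} are rendered as real^'m^'n (rows indexed by 'n, columns by 'm).\<close>

definition pos_mats :: "(real^'m^'n) set" where
  "pos_mats = {A. \<forall>i j. A $ i $ j > 0}"

definition prob_simplex :: "(real^'n) set" where
  "prob_simplex = {p. (\<forall>i. p $ i > 0) \<and> (\<Sum>i\<in>UNIV. p $ i) = 1}"

definition transport_plans :: "real^'n \<Rightarrow> real^'m \<Rightarrow> (real^'m^'n) set" where
  "transport_plans p q = {P \<in> pos_mats.
      (\<forall>i. (\<Sum>j\<in>UNIV. P $ i $ j) = p $ i) \<and> (\<forall>j. (\<Sum>i\<in>UNIV. P $ i $ j) = q $ j)}"

definition mat_pair :: "real^'m^'n \<Rightarrow> real^'m^'n \<Rightarrow> real" where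
  "mat_pair A u = (\<Sum>i\<in>UNIV. \<Sum>j\<in>UNIV. A $ i $ j * u $ i $ j)"

definition legendre :: "(real^'m^'n \<Rightarrow> real) \<Rightarrow> real^'m^'n \<Rightarrow> ereal" where
  "legendre \<Phi> u = (SUP A\<in>pos_mats. ereal (mat_pair A u - \<Phi> A))"

definition oplus :: "real^'n \<Rightarrow> real^'m \<Rightarrow> real^'m^'n" where
  "oplus \<alpha> \<beta> = (\<chi> i j. \<alpha> $ i + \<beta> $ j)"

end

theory Submission
  imports Defs
begin

(* With marginals P = (row sums, column sums), the plans are the positive matrices with
   marginals P = (p, q), and by homogeneity the Legendre condition legendre \<Phi> (oplus \<alpha> \<beta>) = 0
   says exactly that the linear functional (\<alpha>, \<beta>) \<bullet> marginals lies below \<Phi> on positive matrices;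
   this gives weak duality at once. For strong duality, let v be a lower bound of the primal
   problem and separate the origin from the convex set of points (marginals A - (p, q) + z, r - v)
   with \<Phi> A < r and z orthogonal to the range of marginals. Because the positive matrices form an
   open cone containing the plan p q^T, the separating functional cannot vanish in the last
   coordinate; rescaled, it is an affine minorant of \<Phi>, which homogeneity turns into a linear
   minorant whose value at (p, q) is at least v. *)

lemma le_all_pos_multiples_iff:
  fixes K y :: real
  shows "(\<forall>t>0. K \<le> t * y) \<longleftrightarrow> K \<le> 0 \<and> 0 \<le> y"
proof safe
  assume bound: "\<forall>t>0. K \<le> t * y"
  show "0 \<le> y"
  proof (rule ccontr)
    assume "\<not> 0 \<le> y"
    then have "K \<le> ((\<bar>K\<bar> + 1) / - y) * y"
      by (intro bound[rule_format]) (simp add: divide_pos_neg)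
    with \<open>\<not> 0 \<le> y\<close> show False by simp
  qed
  show "K \<le> 0"
  proof (rule ccontr)
    assume "\<not> K \<le> 0"
    then have "K \<le> (K / (2 * (y + 1))) * y"
      using \<open>0 \<le> y\<close> by (intro bound[rule_format]) simp
    also have "\<dots> < K"
      using \<open>\<not> K \<le> 0\<close> \<open>0 \<le> y\<close> by (simp add: field_simps add_nonneg_pos)
    finally show False by simp
  qed
qed (simp add: mult_nonneg_nonneg order_trans)

lemma convex_strict_epigraph:
  assumes "convex_on C f"
  shows "convex {(x, r). x \<in> C \<and> f x < r}"
proof (rule convexI, clarsimp)
  fix x r x' r' and u w :: real
  assume "x \<in> C" "f x < r" "x' \<in> C" "f x' < r'" and u: "0 \<le> u" and w: "0 \<le> w" and uw: "u + w = 1"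
  show "u *\<^sub>R x + w *\<^sub>R x' \<in> C \<and> f (u *\<^sub>R x + w *\<^sub>R x') < u * r + w * r'"
  proof
    show "u *\<^sub>R x + w *\<^sub>R x' \<in> C"
      using convexD[OF convex_on_imp_convex[OF assms]] \<open>x \<in> C\<close> \<open>x' \<in> C\<close> u w uw by blast
    have "f (u *\<^sub>R x + w *\<^sub>R x') \<le> u * f x + w * f x'"
      using assms \<open>x \<in> C\<close> \<open>x' \<in> C\<close> u w uw unfolding convex_on_def by blast
    also have "\<dots> < u * r + w * r'"
    proof (cases "u = 0")
      case False
      then have "u * f x < u * r" using \<open>f x < r\<close> u by simp
      moreover have "w * f x' \<le> w * r'" using \<open>f x' < r'\<close> w by (simp add: mult_left_mono)
      ultimately show ?thesis by simp
    qed (use \<open>f x' < r'\<close> uw in simp)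
    finally show "f (u *\<^sub>R x + w *\<^sub>R x') < u * r + w * r'" .
  qed
qed

lemma orthogonal_comp_range_of_local_min:
  fixes L :: "'a::real_normed_vector \<Rightarrow> 'b::real_inner"
  assumes L: "linear L" and "open C" "x0 \<in> C"
    and min: "\<And>x. x \<in> C \<Longrightarrow> a \<bullet> L x0 \<le> a \<bullet> L x"
  shows "a \<in> (range L)\<^sup>\<bottom>"
proof -
  obtain e where "e > 0" and ball: "ball x0 e \<subseteq> C"
    using \<open>open C\<close> \<open>x0 \<in> C\<close> open_contains_ball by blast
  have nonneg: "0 \<le> a \<bullet> L h" for h
  proof -
    define s where "s = e / (norm h + 1)"
    have "s > 0" using \<open>e > 0\<close> by (simp add: s_def add_nonneg_pos)
    have "s * norm h < e"
      using \<open>e > 0\<close> by (simp add: s_def pos_divide_less_eq add_nonneg_pos)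
    then have "x0 + s *\<^sub>R h \<in> C"
      using ball \<open>s > 0\<close> by (auto simp: dist_norm)
    then have "a \<bullet> L x0 \<le> a \<bullet> L x0 + s * (a \<bullet> L h)"
      using min[of "x0 + s *\<^sub>R h"] by (simp add: linear_add[OF L] linear_scale[OF L] inner_add_right)
    then show ?thesis using \<open>s > 0\<close> by (simp add: zero_le_mult_iff)
  qed
  have "a \<bullet> L h = 0" for h
    using nonneg[of h] nonneg[of "- h"] by (simp add: linear_neg[OF L])
  then show ?thesis
    by (auto simp: orthogonal_comp_def orthogonal_def inner_commute)
qed

lemma homogeneous_affine_minorant:
  assumes f: "linear f" and "x0 \<in> C"
    and cone: "\<And>t x. t > 0 \<Longrightarrow> x \<in> C \<Longrightarrow> t *\<^sub>R x \<in> C"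
    and hom: "\<And>t x. t > 0 \<Longrightarrow> x \<in> C \<Longrightarrow> \<Phi> (t *\<^sub>R x) = t * \<Phi> x"
    and minor: "\<And>x. x \<in> C \<Longrightarrow> f x + K \<le> \<Phi> x"
  shows "(\<forall>x\<in>C. f x \<le> \<Phi> x) \<and> K \<le> 0"
proof -
  have scaled: "\<forall>t>0. K \<le> t * (\<Phi> x - f x)" if "x \<in> C" for x
    using minor[OF cone] hom that by (simp add: linear_scale[OF f] algebra_simps)
  show ?thesis
    using scaled \<open>x0 \<in> C\<close> unfolding le_all_pos_multiples_iff by fastforce
qed

lemma separation_below_constrained_infimum:
  fixes L :: "'a::euclidean_space \<Rightarrow> 'b::euclidean_space"
  assumes L: "linear L" and cvx: "convex_on C \<Phi>" and "x0 \<in> C" "L x0 = y"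
    and lb: "\<And>x. x \<in> C \<Longrightarrow> L x = y \<Longrightarrow> v \<le> \<Phi> x"
  obtains a c where "(a, c) \<noteq> 0"
    and "\<And>x r z. x \<in> C \<Longrightarrow> \<Phi> x < r \<Longrightarrow> z \<in> (range L)\<^sup>\<bottom> \<Longrightarrow> 0 \<le> a \<bullet> (L x + z - y) + c * (r - v)"
proof -
  define E where "E = {(x, r). x \<in> C \<and> \<Phi> x < r}"
  define M :: "('a \<times> real) \<times> 'b \<Rightarrow> 'b \<times> real" where "M = (\<lambda>((x, r), z). (L x + z, r))"
  define S where "S = (\<lambda>w. w - (y, v)) ` M ` (E \<times> ((range L)\<^sup>\<bottom>))"
  have S_mem: "M ((x, r), z) - (y, v) \<in> S" if "x \<in> C" "\<Phi> x < r" "z \<in> (range L)\<^sup>\<bottom>" for x r z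
    unfolding S_def using that by (intro imageI) (simp add: E_def)
  have "linear M"
    by (rule linearI) (auto simp: M_def linear_add[OF L] linear_scale[OF L] scaleR_add_right split: prod.split)
  then have "convex S"
    unfolding S_def E_def
    using convex_Times[OF convex_strict_epigraph[OF cvx] subspace_imp_convex[OF subspace_orthogonal_comp]]
    by (intro convex_translation_subtract convex_linear_image)
  moreover have "0 \<notin> S"
  proof
    assume "0 \<in> S"
    then obtain x r z where "(x, r) \<in> E" "z \<in> (range L)\<^sup>\<bottom>" "M ((x, r), z) - (y, v) = 0"
      unfolding S_def image_image by auto
    then have "x \<in> C" "\<Phi> x < r" "L x + z = y" "r = v" by (simp_all add: E_def M_def zero_prod_def)
    then have "z = L (x0 - x)" using \<open>L x0 = y\<close> by (simp add: linear_diff[OF L] algebra_simps)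
    moreover have "orthogonal (L (x0 - x)) z"
      using \<open>z \<in> (range L)\<^sup>\<bottom>\<close> unfolding orthogonal_comp_def by blast
    ultimately have "z = 0" by (simp add: orthogonal_self)
    then have "v \<le> \<Phi> x" using lb \<open>x \<in> C\<close> \<open>L x + z = y\<close> by simp
    then show False using \<open>\<Phi> x < r\<close> \<open>r = v\<close> by simp
  qed
  ultimately obtain w where "w \<noteq> 0" and sep: "\<forall>s\<in>S. 0 \<le> w \<bullet> s"
    using separating_hyperplane_set_0 by blast
  show thesis
  proof (rule that[of "fst w" "snd w"])
    show "(fst w, snd w) \<noteq> 0" using \<open>w \<noteq> 0\<close> by simp
    fix x r z
    assume "x \<in> C" "\<Phi> x < r" "z \<in> (range L)\<^sup>\<bottom>"
    then have "0 \<le> w \<bullet> (M ((x, r), z) - (y, v))" using sep S_mem by blast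
    then show "0 \<le> fst w \<bullet> (L x + z - y) + snd w * (r - v)"
      by (cases w) (simp add: M_def)
  qed
qed

theorem homogeneous_convex_duality:
  fixes L :: "'a::euclidean_space \<Rightarrow> 'b::euclidean_space"
  assumes L: "linear L" and "open C" "x0 \<in> C"
    and cone: "\<And>t x. t > 0 \<Longrightarrow> x \<in> C \<Longrightarrow> t *\<^sub>R x \<in> C"
    and cvx: "convex_on C \<Phi>" and hom: "\<And>t x. t > 0 \<Longrightarrow> x \<in> C \<Longrightarrow> \<Phi> (t *\<^sub>R x) = t * \<Phi> x"
    and "L x0 = y" and lb: "\<And>x. x \<in> C \<Longrightarrow> L x = y \<Longrightarrow> v \<le> \<Phi> x"
  shows "\<exists>\<mu>. (\<forall>x\<in>C. \<mu> \<bullet> L x \<le> \<Phi> x) \<and> v \<le> \<mu> \<bullet> y"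
proof -
  obtain a c where "(a, c) \<noteq> 0" and sep:
    "\<And>x r z. x \<in> C \<Longrightarrow> \<Phi> x < r \<Longrightarrow> z \<in> (range L)\<^sup>\<bottom> \<Longrightarrow> 0 \<le> a \<bullet> (L x + z - y) + c * (r - v)"
    using separation_below_constrained_infimum[OF L cvx \<open>x0 \<in> C\<close> \<open>L x0 = y\<close> lb] by blast
  have "0 \<le> c"
  proof -
    have "\<forall>R>0. - (a \<bullet> (L x0 - y) + c * (\<Phi> x0 - v)) \<le> R * c"
      using sep[OF \<open>x0 \<in> C\<close>, of "\<Phi> x0 + _" 0] by (simp add: subspace_0[OF subspace_orthogonal_comp] algebra_simps)
    then show ?thesis unfolding le_all_pos_multiples_iff by simp
  qed
  have minor: "0 \<le> a \<bullet> (L x - y) + c * (\<Phi> x - v)" if "x \<in> C" for x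
  proof -
    have "\<forall>d>0. - (a \<bullet> (L x - y) + c * (\<Phi> x - v)) \<le> d * c"
      using sep[OF that, of "\<Phi> x + _" 0] by (simp add: subspace_0[OF subspace_orthogonal_comp] algebra_simps)
    then show ?thesis unfolding le_all_pos_multiples_iff by simp
  qed
  have "c \<noteq> 0"
  proof
    assume "c = 0"
    then have "a \<in> (range L)\<^sup>\<bottom>"
      using minor \<open>L x0 = y\<close>
      by (intro orthogonal_comp_range_of_local_min[OF L \<open>open C\<close> \<open>x0 \<in> C\<close>]) (simp add: inner_diff_right)
    then have "0 \<le> a \<bullet> (L x0 + - a - y)"
      using sep[OF \<open>x0 \<in> C\<close>, of "\<Phi> x0 + 1" "- a"] \<open>c = 0\<close>
      by (simp add: subspace_neg[OF subspace_orthogonal_comp])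
    then have "a \<bullet> a \<le> 0" using \<open>L x0 = y\<close> by simp
    then have "a = 0" by (metis antisym inner_eq_zero_iff inner_ge_zero)
    with \<open>(a, c) \<noteq> 0\<close> \<open>c = 0\<close> show False by (simp add: zero_prod_def)
  qed
  define \<mu> where "\<mu> = - (1 / c) *\<^sub>R a"
  have "\<mu> \<bullet> L x + (v - \<mu> \<bullet> y) \<le> \<Phi> x" if "x \<in> C" for x
  proof -
    have "\<Phi> x - (\<mu> \<bullet> L x + (v - \<mu> \<bullet> y)) = (a \<bullet> (L x - y) + c * (\<Phi> x - v)) / c"
      using \<open>c \<noteq> 0\<close> by (simp add: \<mu>_def inner_diff_right field_simps)
    also have "\<dots> \<ge> 0" using minor[OF that] \<open>0 \<le> c\<close> by simp
    finally show ?thesis by simp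
  qed
  moreover have "linear (\<lambda>x. \<mu> \<bullet> L x)"
    by (simp add: linear_iff linear_add[OF L] linear_scale[OF L] inner_add_right)
  ultimately have "(\<forall>x\<in>C. \<mu> \<bullet> L x \<le> \<Phi> x) \<and> v - \<mu> \<bullet> y \<le> 0"
    using homogeneous_affine_minorant[OF _ \<open>x0 \<in> C\<close> cone hom] by blast
  then show ?thesis by auto
qed

definition marginals :: "real^'m^'n \<Rightarrow> (real^'n) \<times> (real^'m)" where
  "marginals A = ((\<chi> i. \<Sum>j\<in>UNIV. A $ i $ j), (\<chi> j. \<Sum>i\<in>UNIV. A $ i $ j))"

lemma linear_marginals: "linear marginals"
  by (rule linearI) (simp_all add: marginals_def vec_eq_iff sum.distrib sum_distrib_left)

lemma transport_plans_eq: "transport_plans p q = {P \<in> pos_mats. marginals P = (p, q)}"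
  unfolding transport_plans_def marginals_def by (auto simp: vec_eq_iff)

lemma inner_marginals: "(\<alpha>, \<beta>) \<bullet> marginals A = mat_pair A (oplus \<alpha> \<beta>)"
proof -
  have "(\<Sum>j\<in>UNIV. \<beta> $ j * (\<Sum>i\<in>UNIV. A $ i $ j)) = (\<Sum>j\<in>UNIV. \<Sum>i\<in>UNIV. A $ i $ j * \<beta> $ j)"
    by (simp add: sum_distrib_left mult.commute)
  also have "\<dots> = (\<Sum>i\<in>UNIV. \<Sum>j\<in>UNIV. A $ i $ j * \<beta> $ j)"
    by (rule sum.swap)
  finally show ?thesis
    unfolding marginals_def mat_pair_def oplus_def
    by (simp add: inner_vec_def sum_distrib_left distrib_left sum.distrib mult_ac)
qed

lemma outer_product_transport_plan:
  assumes "p \<in> prob_simplex" and "q \<in> prob_simplex"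
  shows "(\<chi> i j. p $ i * q $ j) \<in> transport_plans p q"
  using assms unfolding transport_plans_def pos_mats_def prob_simplex_def
  by (simp add: sum_distrib_left[symmetric] sum_distrib_right[symmetric])

lemma open_pos_mats: "open (pos_mats :: (real^'m^'n) set)"
proof -
  have eq: "pos_mats = (\<Inter>i. \<Inter>j. {A :: real^'m^'n. A $ i $ j > 0})"
    unfolding pos_mats_def by auto
  show ?thesis
    unfolding eq by (intro open_INT ballI open_Collect_less continuous_intros) simp_all
qed

lemma scaleR_pos_mats: "t > 0 \<Longrightarrow> A \<in> pos_mats \<Longrightarrow> t *\<^sub>R A \<in> pos_mats"
  unfolding pos_mats_def by simp

lemma mat_pair_scaleR: "mat_pair (t *\<^sub>R A) u = t * mat_pair A u"
  unfolding mat_pair_def by (simp add: sum_distrib_left mult.assoc)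

lemma legendre_nonneg:
  fixes \<Phi> :: "real^'m^'n \<Rightarrow> real"
  assumes hom: "\<And>t A. t > 0 \<Longrightarrow> A \<in> pos_mats \<Longrightarrow> \<Phi> (t *\<^sub>R A) = t * \<Phi> A"
  shows "0 \<le> legendre \<Phi> u"
proof -
  define A :: "real^'m^'n" where "A = (\<chi> i j. 1)"
  define c where "c = mat_pair A u - \<Phi> A"
  have "A \<in> pos_mats" by (simp add: A_def pos_mats_def)
  have below: "ereal (t * c) \<le> legendre \<Phi> u" if "t > 0" for t
  proof -
    have "ereal (mat_pair (t *\<^sub>R A) u - \<Phi> (t *\<^sub>R A)) \<le> legendre \<Phi> u"
      unfolding legendre_def using scaleR_pos_mats[OF that \<open>A \<in> pos_mats\<close>] by (rule SUP_upper)
    then show ?thesis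
      using hom[OF that \<open>A \<in> pos_mats\<close>] by (simp add: c_def mat_pair_scaleR right_diff_distrib)
  qed
  have "((\<lambda>t. t * c) \<longlongrightarrow> 0) (at_right 0)"
    by (intro tendsto_mult_left_zero tendsto_ident_at)
  then have "((\<lambda>t. ereal (t * c)) \<longlongrightarrow> ereal 0) (at_right 0)"
    by (rule tendsto_ereal)
  moreover have "\<forall>\<^sub>F t in at_right 0. ereal (t * c) \<le> legendre \<Phi> u"
    by (rule eventually_mono[OF eventually_at_right_less below])
  ultimately have "ereal 0 \<le> legendre \<Phi> u"
    by (rule tendsto_upperbound) simp
  then show ?thesis by (simp add: zero_ereal_def)
qed

lemma legendre_eq_0_iff:
  fixes \<Phi> :: "real^'m^'n \<Rightarrow> real"
  assumes hom: "\<And>t A. t > 0 \<Longrightarrow> A \<in> pos_mats \<Longrightarrow> \<Phi> (t *\<^sub>R A) = t * \<Phi> A"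
  shows "legendre \<Phi> u = 0 \<longleftrightarrow> (\<forall>A\<in>pos_mats. mat_pair A u \<le> \<Phi> A)"
proof -
  have "legendre \<Phi> u \<le> 0 \<longleftrightarrow> (\<forall>A\<in>pos_mats. mat_pair A u \<le> \<Phi> A)"
    unfolding legendre_def by (simp add: SUP_le_iff)
  then show ?thesis
    using legendre_nonneg[OF hom, of u] by auto
qed

lemma ereal_INF_le_SUP_if_lower_bounds:
  fixes f :: "'a \<Rightarrow> real" and g :: "'b \<Rightarrow> real"
  assumes "X \<noteq> {}" and bounds: "\<And>v. (\<And>x. x \<in> X \<Longrightarrow> v \<le> f x) \<Longrightarrow> \<exists>y\<in>Y. v \<le> g y"
  shows "(INF x\<in>X. ereal (f x)) \<le> (SUP y\<in>Y. ereal (g y))"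
proof (cases "INF x\<in>X. ereal (f x)")
  case (real v)
  then have "v \<le> f x" if "x \<in> X" for x
    using INF_lower[OF that, of "\<lambda>x. ereal (f x)"] by simp
  then obtain y where "y \<in> Y" "v \<le> g y" using bounds by blast
  have "(INF x\<in>X. ereal (f x)) \<le> ereal (g y)" using real \<open>v \<le> g y\<close> by simp
  also have "\<dots> \<le> (SUP y\<in>Y. ereal (g y))" using \<open>y \<in> Y\<close> by (rule SUP_upper)
  finally show ?thesis .
next
  case PInf
  obtain x where "x \<in> X" using \<open>X \<noteq> {}\<close> by blast
  then have "(INF x\<in>X. ereal (f x)) \<le> ereal (f x)" by (rule INF_lower)
  with PInf show ?thesis by simp
qed simp

theorem lemmaA2:
  fixes \<Phi> :: "real^'m^'n \<Rightarrow> real" and p :: "real^'n" and q :: "real^'m"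
  assumes "convex_on pos_mats \<Phi>"
    and "\<And>t A. t > 0 \<Longrightarrow> A \<in> pos_mats \<Longrightarrow> \<Phi> (t *\<^sub>R A) = t * \<Phi> A"
    and "p \<in> prob_simplex" and "q \<in> prob_simplex"
  shows "(INF P\<in>transport_plans p q. ereal (\<Phi> P)) =
         (SUP ab\<in>{(\<alpha>, \<beta>). legendre \<Phi> (oplus \<alpha> \<beta>) = 0}. ereal (p \<bullet> fst ab + q \<bullet> snd ab))"
proof (rule antisym)
  have dual_feasible: "legendre \<Phi> (oplus \<alpha> \<beta>) = 0 \<longleftrightarrow> (\<forall>A\<in>pos_mats. (\<alpha>, \<beta>) \<bullet> marginals A \<le> \<Phi> A)"
    for \<alpha> \<beta> by (simp add: legendre_eq_0_iff[OF assms(2)] inner_marginals)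
  obtain P0 where P0: "P0 \<in> pos_mats" "marginals P0 = (p, q)"
    using outer_product_transport_plan[OF assms(3,4)] by (auto simp: transport_plans_eq)
  show "(INF P\<in>transport_plans p q. ereal (\<Phi> P)) \<le>
        (SUP ab\<in>{(\<alpha>, \<beta>). legendre \<Phi> (oplus \<alpha> \<beta>) = 0}. ereal (p \<bullet> fst ab + q \<bullet> snd ab))"
  proof (rule ereal_INF_le_SUP_if_lower_bounds)
    show "transport_plans p q \<noteq> {}" using P0 by (auto simp: transport_plans_eq)
    fix v assume "\<And>P. P \<in> transport_plans p q \<Longrightarrow> v \<le> \<Phi> P"
    then have "\<And>P. P \<in> pos_mats \<Longrightarrow> marginals P = (p, q) \<Longrightarrow> v \<le> \<Phi> P"
      by (simp add: transport_plans_eq)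
    then obtain \<mu> where "\<forall>A\<in>pos_mats. \<mu> \<bullet> marginals A \<le> \<Phi> A" "v \<le> \<mu> \<bullet> (p, q)"
      using homogeneous_convex_duality[OF linear_marginals open_pos_mats P0(1) scaleR_pos_mats assms(1,2) P0(2)]
      by blast
    then show "\<exists>ab\<in>{(\<alpha>, \<beta>). legendre \<Phi> (oplus \<alpha> \<beta>) = 0}. v \<le> p \<bullet> fst ab + q \<bullet> snd ab"
      using dual_feasible by (cases \<mu>) (auto simp: inner_commute)
  qed
  show "(SUP ab\<in>{(\<alpha>, \<beta>). legendre \<Phi> (oplus \<alpha> \<beta>) = 0}. ereal (p \<bullet> fst ab + q \<bullet> snd ab)) \<le>
        (INF P\<in>transport_plans p q. ereal (\<Phi> P))"
  proof (intro SUP_least INF_greatest)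
    fix ab P
    assume "ab \<in> {(\<alpha>, \<beta>). legendre \<Phi> (oplus \<alpha> \<beta>) = 0}" and "P \<in> transport_plans p q"
    then show "ereal (p \<bullet> fst ab + q \<bullet> snd ab) \<le> ereal (\<Phi> P)"
      using dual_feasible by (cases ab) (auto simp: transport_plans_eq inner_commute)
  qed
qed

end
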